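(* Let $\Omega=\{1,\ldots,n\}$, $k\in\Omega$, and let $\phi$ be a generalized metric satisfying the triangle inequality, i.e. $\phi(x\|y)\le\phi(x\|z)+\phi(z\|y)$ for all distributions $x,y,z$ on a common finite set. Then $\widehat{\phi}_k(p\|q)\le\widehat{\phi}_k(p\|r)+\widehat{\phi}_k(r\|q)$ for all $\Omega$-point distributions $p,q,r$.
   Context: An $\Omega$-point distribution is a probability vector on $\Omega=\{1,\ldots,n\}$. $\phi$ assigns a real number $\phi(p\|q)$ to each pair of probability distributions on the same finite set. $\mathcal P_k(\Omega)$ is the set of partitions of $\Omega$ into exactly $k$ nonempty disjoint cells; for $\rho\in\mathcal P_k(\Omega)$, $\widehat p_\rho(a)=\sum_{i\in a}p(i)$ for $a\in\rho$ defines a distribution on the cells of $\rho$. The Sketch $\star$-metric is $\widehat{\phi}_k(p\|q)=\max_{\rho\in\mathcal P_k(\Omega)}\phi(\widehat p_\rho\|\widehat q_\rho)$. *)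

theory Defs
  imports Complex_Main "HOL-Library.Disjoint_Sets"
begin

definition prob_dist :: "'a set \<Rightarrow> ('a \<Rightarrow> real) \<Rightarrow> bool" where
  "prob_dist A p \<longleftrightarrow> finite A \<and> (\<forall>x\<in>A. 0 \<le> p x) \<and> sum p A = 1"

definition partitions_k :: "'a set \<Rightarrow> nat \<Rightarrow> 'a set set set" where
  "partitions_k \<Omega> k = {\<rho>. partition_on \<Omega> \<rho> \<and> card \<rho> = k}"

definition coarsen :: "'a set set \<Rightarrow> ('a \<Rightarrow> real) \<Rightarrow> ('a set \<Rightarrow> real)" where
  "coarsen \<rho> p = (\<lambda>a. if a \<in> \<rho> then sum p a else 0)"

text \<open>The Sketch star-metric. phi takes the carrier set of the distributions
  as first argument.\<close>
definition sketch :: "('a set set \<Rightarrow> ('a set \<Rightarrow> real) \<Rightarrow> ('a set \<Rightarrow> real) \<Rightarrow> real)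
    \<Rightarrow> 'a set \<Rightarrow> nat \<Rightarrow> ('a \<Rightarrow> real) \<Rightarrow> ('a \<Rightarrow> real) \<Rightarrow> real" where
  "sketch \<phi> \<Omega> k p q = Max ((\<lambda>\<rho>. \<phi> \<rho> (coarsen \<rho> p) (coarsen \<rho> q)) ` partitions_k \<Omega> k)"

end

theory Submission
  imports Defs
begin

text \<open>The maximum defining the sketch metric is attained at some partition \<open>\<rho>\<close>; there the
  triangle inequality for \<open>\<phi>\<close> splits the value into two terms, each bounded by the
  corresponding maximum over all partitions.\<close>

lemma prob_dist_coarsen:
  assumes part: "partition_on \<Omega> \<rho>" and p: "prob_dist \<Omega> p"
  shows "prob_dist \<rho> (coarsen \<rho> p)"
proof -
  have fin_\<Omega>: "finite \<Omega>" using p by (simp add: prob_dist_def)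
  have sub: "\<And>a. a \<in> \<rho> \<Longrightarrow> a \<subseteq> \<Omega>" using part by (blast dest: partition_onD1)
  have fin_cells: "\<And>a. a \<in> \<rho> \<Longrightarrow> finite a" using sub fin_\<Omega> finite_subset by blast
  have nonneg: "\<forall>a\<in>\<rho>. 0 \<le> coarsen \<rho> p a"
    using p sub by (auto simp: coarsen_def prob_dist_def intro!: sum_nonneg)
  have "sum (coarsen \<rho> p) \<rho> = (\<Sum>a\<in>\<rho>. sum p a)" by (simp add: coarsen_def)
  also have "\<dots> = sum p (\<Union>\<rho>)"
    using sum.Union_disjoint[of \<rho> p] fin_cells part
    by (auto simp: partition_on_def disjoint_def)
  also have "\<Union>\<rho> = \<Omega>" using part by (simp add: partition_on_def)
  finally show ?thesis
    using finite_elements[OF fin_\<Omega> part] nonneg p by (simp add: prob_dist_def)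
qed

lemma finite_partitions_k:
  assumes "finite \<Omega>"
  shows "finite (partitions_k \<Omega> k)"
proof -
  have "partitions_k \<Omega> k \<subseteq> Pow (Pow \<Omega>)"
    by (auto simp: partitions_k_def dest: partition_onD1)
  then show ?thesis using assms by (simp add: finite_subset)
qed

text \<open>Witness: the singletons \<open>{1}, \<dots>, {k - 1}\<close> together with the block \<open>{k..n}\<close>.\<close>
lemma partitions_k_atLeastAtMost_nonempty:
  assumes "k \<in> {1..(n::nat)}"
  shows "partitions_k {1..n} k \<noteq> {}"
proof -
  define \<rho> where "\<rho> = (\<lambda>i. {i}) ` {1..<k} \<union> {{k..n}}"
  have "partition_on {1..n} \<rho>"
    unfolding partition_on_def disjoint_def \<rho>_def using assms by auto
  moreover have "card \<rho> = k"
  proof -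
    have "card ((\<lambda>i. {i}) ` {1..<k}) = k - 1" by (subst card_image) (auto simp: inj_on_def)
    moreover have "{k..n} \<notin> (\<lambda>i. {i}) ` {1..<k}" using assms by auto
    ultimately show ?thesis unfolding \<rho>_def using assms by (simp add: card_insert_if)
  qed
  ultimately show ?thesis by (auto simp: partitions_k_def)
qed

lemma sketch_ge:
  assumes "finite \<Omega>" and "\<rho> \<in> partitions_k \<Omega> k"
  shows "\<phi> \<rho> (coarsen \<rho> p) (coarsen \<rho> q) \<le> sketch \<phi> \<Omega> k p q"
  unfolding sketch_def using assms finite_partitions_k by (intro Max_ge) auto

lemma sketch_attained:
  assumes "finite \<Omega>" and "partitions_k \<Omega> k \<noteq> {}"
  obtains \<rho> where "\<rho> \<in> partitions_k \<Omega> k"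
    and "sketch \<phi> \<Omega> k p q = \<phi> \<rho> (coarsen \<rho> p) (coarsen \<rho> q)"
proof -
  have "sketch \<phi> \<Omega> k p q \<in> (\<lambda>\<rho>. \<phi> \<rho> (coarsen \<rho> p) (coarsen \<rho> q)) ` partitions_k \<Omega> k"
    unfolding sketch_def using assms finite_partitions_k by (intro Max_in) auto
  then show ?thesis using that by blast
qed

lemma sketch_triangle:
  assumes tri: "\<And>A x y z. prob_dist A x \<Longrightarrow> prob_dist A y \<Longrightarrow> prob_dist A z \<Longrightarrow>
                  \<phi> A x y \<le> \<phi> A x z + \<phi> A z y"
    and ne: "partitions_k \<Omega> k \<noteq> {}"
    and p: "prob_dist \<Omega> p" and q: "prob_dist \<Omega> q" and r: "prob_dist \<Omega> r"
  shows "sketch \<phi> \<Omega> k p q \<le> sketch \<phi> \<Omega> k p r + sketch \<phi> \<Omega> k r q"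
proof -
  have fin: "finite \<Omega>" using p by (simp add: prob_dist_def)
  obtain \<rho> where \<rho>: "\<rho> \<in> partitions_k \<Omega> k"
    and max: "sketch \<phi> \<Omega> k p q = \<phi> \<rho> (coarsen \<rho> p) (coarsen \<rho> q)"
    using sketch_attained[OF fin ne] .
  have part: "partition_on \<Omega> \<rho>" using \<rho> by (simp add: partitions_k_def)
  have "\<phi> \<rho> (coarsen \<rho> p) (coarsen \<rho> q)
      \<le> \<phi> \<rho> (coarsen \<rho> p) (coarsen \<rho> r) + \<phi> \<rho> (coarsen \<rho> r) (coarsen \<rho> q)"
    using tri prob_dist_coarsen[OF part] p q r by blast
  also have "\<phi> \<rho> (coarsen \<rho> p) (coarsen \<rho> r) \<le> sketch \<phi> \<Omega> k p r"
    using sketch_ge[OF fin \<rho>] .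
  also have "\<phi> \<rho> (coarsen \<rho> r) (coarsen \<rho> q) \<le> sketch \<phi> \<Omega> k r q"
    using sketch_ge[OF fin \<rho>] .
  finally show ?thesis using max by simp
qed

theorem lemma4:
  fixes \<phi> :: "nat set set \<Rightarrow> (nat set \<Rightarrow> real) \<Rightarrow> (nat set \<Rightarrow> real) \<Rightarrow> real"
    and n k :: nat and p q r :: "nat \<Rightarrow> real"
  assumes tri: "\<And>A x y z. prob_dist A x \<Longrightarrow> prob_dist A y \<Longrightarrow> prob_dist A z \<Longrightarrow>
                  \<phi> A x y \<le> \<phi> A x z + \<phi> A z y"
    and k: "k \<in> {1..n}"
    and p: "prob_dist {1..n} p" and q: "prob_dist {1..n} q" and r: "prob_dist {1..n} r"
  shows "sketch \<phi> {1..n} k p q \<le> sketch \<phi> {1..n} k p r + sketch \<phi> {1..n} k r q"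
  using sketch_triangle[OF tri partitions_k_atLeastAtMost_nonempty[OF k] p q r] .

end
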